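(* Both \textsc{Greedy Min-Sum} and \textsc{Greedy Min-Max} have competitive ratio $\Omega(n)$ with respect to the \textsc{Min-Max} objective, where $n$ is the number of agents.
   Context: An instance $\mathcal{I}=(N,P,T,(\mathbf{D}_i)_{i\in N})$ has agents $N=[n]$, projects $P=\{p_1,\dots,p_m\}$, timesteps $T=[\ell]$, and disapproval sets $D_{ik}\subseteq P$. An outcome is $\mathbf{o}\in P^\ell$, $\mathbf{o}^{(k)}=(o_1,\dots,o_k)$, $d_i(\mathbf{o}^{(k)})=|\{t\in[k]:o_t\in D_{it}\}|$, $d_i(\mathbf{o})=d_i(\mathbf{o}^{(\ell)})$. An online algorithm chooses each $o_k$ based only on $(D_{it})_{i\in N,t\in[k]}$. \textsc{Greedy Min-Sum} picks at each timestep $k$ a project minimizing $|\{i:p\in D_{ik}\}|$ (ties broken lexicographically by $p_1,\dots,p_m$). \textsc{Greedy Min-Max} picks at each timestep $k$ a project $o_k$ minimizing $\max_{i\in N}d_i(\mathbf{o}^{(k)})$ given the already chosen $o_1,\dots,o_{k-1}$ (ties broken lexicographically). The competitive ratio of an online algorithm $\mathcal{B}$ with respect to \textsc{Min-Max} is $\sup_{\mathcal{I}}\frac{\max_i d_i(\mathcal{B}(\mathcal{I}))}{\min_{\mathbf{o}}\max_i d_i(\mathbf{o})}$, considered as a function of $n$. *)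

theory Defs
  imports Complex_Main "HOL-Library.Extended_Real"
begin

text \<open>Agents are 0..n-1, projects 0..m-1, timesteps 0..l-1 (0-indexed).
  A disapproval profile is D :: agent => timestep => project set, D i t being D_{i,t+1}.
  An outcome (or prefix of one) is a list of projects; os ! t is the project chosen
  at timestep t.\<close>

type_synonym profile = "nat \<Rightarrow> nat \<Rightarrow> nat set"

definition dis :: "profile \<Rightarrow> nat \<Rightarrow> nat list \<Rightarrow> nat" where
  "dis D i os = card {t. t < length os \<and> os ! t \<in> D i t}"

definition maxdis :: "nat \<Rightarrow> profile \<Rightarrow> nat list \<Rightarrow> nat" where
  "maxdis n D os = Max (insert 0 {dis D i os | i. i < n})"

definition lexargmin :: "nat \<Rightarrow> (nat \<Rightarrow> nat) \<Rightarrow> nat" where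
  "lexargmin m f = (LEAST p. p < m \<and> (\<forall>q<m. f p \<le> f q))"

definition greedy_minsum :: "nat \<Rightarrow> nat \<Rightarrow> nat \<Rightarrow> profile \<Rightarrow> nat list" where
  "greedy_minsum n m l D = map (\<lambda>k. lexargmin m (\<lambda>p. card {i. i < n \<and> p \<in> D i k})) [0..<l]"

fun greedy_minmax_prefix :: "nat \<Rightarrow> nat \<Rightarrow> profile \<Rightarrow> nat \<Rightarrow> nat list" where
  "greedy_minmax_prefix n m D 0 = []"
| "greedy_minmax_prefix n m D (Suc k) =
     (let xs = greedy_minmax_prefix n m D k
      in xs @ [lexargmin m (\<lambda>p. maxdis n D (xs @ [p]))])"

definition greedy_minmax :: "nat \<Rightarrow> nat \<Rightarrow> nat \<Rightarrow> profile \<Rightarrow> nat list" where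
  "greedy_minmax n m l D = greedy_minmax_prefix n m D l"

definition opt_minmax :: "nat \<Rightarrow> nat \<Rightarrow> nat \<Rightarrow> profile \<Rightarrow> nat" where
  "opt_minmax n m l D = Min {maxdis n D os | os. length os = l \<and> set os \<subseteq> {..<m}}"

definition instances :: "(nat \<times> nat \<times> profile) set" where
  "instances = {(m, l, D). 0 < m \<and> (\<forall>i t. D i t \<subseteq> {..<m})}"

text \<open>Ratio alg/opt, with x/0 = infinity for x > 0 and 0/0 = 0.\<close>
definition ratio :: "nat \<Rightarrow> nat \<Rightarrow> ereal" where
  "ratio a b = (if b = 0 then (if a = 0 then 0 else \<infinity>) else ereal (real a / real b))"

definition competitive_ratio ::
  "(nat \<Rightarrow> nat \<Rightarrow> nat \<Rightarrow> profile \<Rightarrow> nat list) \<Rightarrow> nat \<Rightarrow> ereal" where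
  "competitive_ratio alg n =
     (SUP (m, l, D) \<in> instances. ratio (maxdis n D (alg n m l D)) (opt_minmax n m l D))"

end

theory Submission
  imports Defs
begin

text \<open>Two projects suffice to fool both greedy rules, while always choosing project 1
  costs every agent at most one disapproval, so the offline optimum is at most 1.
  For Min-Sum, agent 0 always disapproves project 0, and project 1 is disapproved at
  timestep t only by agent t+1: every step is a tie, broken towards project 0, and
  agent 0 collects n-1 disapprovals. For Min-Max, everybody disapproves project 0 and
  agent t also disapproves project 1 at timestep t: after k choices of project 0,
  choosing project 1 would leave agent k with k+1 disapprovals, no better than
  choosing project 0 again, so greedy picks project 0 throughout and ends at n.\<close>

lemma dis_le_length: "dis D i os \<le> length os"
proof -
  have "card {t. t < length os \<and> os ! t \<in> D i t} \<le> card {..<length os}"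
    by (intro card_mono) auto
  then show ?thesis unfolding dis_def by simp
qed

lemma dis_replicate: "dis D i (replicate l p) = card {t. t < l \<and> p \<in> D i t}"
  unfolding dis_def by (intro arg_cong[where f = card]) auto

lemma maxdis_le_iff: "maxdis n D os \<le> b \<longleftrightarrow> (\<forall>i<n. dis D i os \<le> b)"
proof -
  have "{dis D i os | i. i < n} = (\<lambda>i. dis D i os) ` {..<n}" by auto
  then show ?thesis unfolding maxdis_def by auto
qed

lemma dis_le_maxdis: "i < n \<Longrightarrow> dis D i os \<le> maxdis n D os"
  using maxdis_le_iff by blast

lemma maxdis_le_length: "maxdis n D os \<le> length os"
  by (simp add: maxdis_le_iff dis_le_length)

lemma maxdis_replicate_le_1:
  assumes "\<And>i t t'. i < n \<Longrightarrow> p \<in> D i t \<Longrightarrow> p \<in> D i t' \<Longrightarrow> t = t'"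
  shows "maxdis n D (replicate l p) \<le> 1"
  unfolding maxdis_le_iff dis_replicate
proof (intro allI impI)
  fix i
  assume "i < n"
  then show "card {t. t < l \<and> p \<in> D i t} \<le> 1"
    using assms by (auto simp: card_le_Suc0_iff_eq One_nat_def)
qed

lemma lexargmin_two_eq_0: "f 0 \<le> f 1 \<Longrightarrow> lexargmin 2 f = 0"
  unfolding lexargmin_def by (rule Least_eq_0) (auto simp: less_2_cases_iff)

lemma opt_minmax_le_maxdis:
  assumes "length os = l" "set os \<subseteq> {..<m}"
  shows "opt_minmax n m l D \<le> maxdis n D os"
proof -
  have "{maxdis n D os | os. length os = l \<and> set os \<subseteq> {..<m}}
          = maxdis n D ` {os. set os \<subseteq> {..<m} \<and> length os = l}"
    by auto
  then have "finite {maxdis n D os | os. length os = l \<and> set os \<subseteq> {..<m}}"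
    using finite_lists_length_eq[of "{..<m}" l] by simp
  then show ?thesis unfolding opt_minmax_def using assms by (intro Min_le) auto
qed

lemma ratio_ge_if_le_1: "b \<le> 1 \<Longrightarrow> ereal (real a) \<le> ratio a b"
  by (cases "b = 0") (auto simp: ratio_def le_Suc_eq)

lemma competitive_ratio_ge_if_opt_le_1:
  assumes "(m, l, D) \<in> instances"
    and "length os = l" "set os \<subseteq> {..<m}" "maxdis n D os \<le> 1"
    and "k \<le> maxdis n D (alg n m l D)"
  shows "ereal (real k) \<le> competitive_ratio alg n"
proof -
  have "opt_minmax n m l D \<le> 1"
    using opt_minmax_le_maxdis[OF assms(2,3)] assms(4) by (rule order_trans)
  have "ereal (real k) \<le> ereal (real (maxdis n D (alg n m l D)))"
    using assms(5) by simp
  also have "\<dots> \<le> ratio (maxdis n D (alg n m l D)) (opt_minmax n m l D)"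
    using \<open>opt_minmax n m l D \<le> 1\<close> by (rule ratio_ge_if_le_1)
  also have "\<dots> \<le> competitive_ratio alg n"
    unfolding competitive_ratio_def
    using SUP_upper[OF assms(1), of "\<lambda>(m, l, D). ratio (maxdis n D (alg n m l D)) (opt_minmax n m l D)"]
    by simp
  finally show ?thesis .
qed

definition minsum_hard_profile :: profile where
  "minsum_hard_profile i t = (if i = 0 then {0} else if i = Suc t then {1} else {})"

definition minmax_hard_profile :: profile where
  "minmax_hard_profile i t = {0} \<union> (if i = t then {1} else {})"

lemma greedy_minsum_hard_profile:
  "greedy_minsum n 2 (n - 1) minsum_hard_profile = replicate (n - 1) 0"
proof -
  have "lexargmin 2 (\<lambda>p. card {i. i < n \<and> p \<in> minsum_hard_profile i k}) = 0" if "k < n - 1" for k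
  proof (rule lexargmin_two_eq_0)
    have "{i. i < n \<and> 0 \<in> minsum_hard_profile i k} = {0}"
      using that by (auto simp: minsum_hard_profile_def)
    moreover have "{i. i < n \<and> 1 \<in> minsum_hard_profile i k} = {Suc k}"
      using that by (auto simp: minsum_hard_profile_def)
    ultimately show "card {i. i < n \<and> 0 \<in> minsum_hard_profile i k}
                       \<le> card {i. i < n \<and> 1 \<in> minsum_hard_profile i k}"
      by simp
  qed
  then show ?thesis unfolding greedy_minsum_def by (intro nth_equalityI) auto
qed

lemma greedy_minmax_prefix_hard_profile:
  "k \<le> n \<Longrightarrow> greedy_minmax_prefix n 2 minmax_hard_profile k = replicate k 0"
proof (induction k)
  case 0
  then show ?case by simp
next
  case (Suc k)
  let ?D = minmax_hard_profile
  have "lexargmin 2 (\<lambda>p. maxdis n ?D (replicate k 0 @ [p])) = 0"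
  proof (rule lexargmin_two_eq_0)
    have "maxdis n ?D (replicate k 0 @ [0]) \<le> Suc k"
      using maxdis_le_length[of n ?D "replicate k 0 @ [0]"] by simp
    also have "Suc k = dis ?D k (replicate k 0 @ [1])"
    proof -
      have "{t. t < Suc k \<and> (replicate k 0 @ [1]) ! t \<in> ?D k t} = {..<Suc k}"
        by (auto simp: minmax_hard_profile_def nth_append)
      then show ?thesis unfolding dis_def by simp
    qed
    also have "\<dots> \<le> maxdis n ?D (replicate k 0 @ [1])"
      using Suc.prems by (intro dis_le_maxdis) simp
    finally show "maxdis n ?D (replicate k 0 @ [0]) \<le> maxdis n ?D (replicate k 0 @ [1])" .
  qed
  then show ?case using Suc by (simp add: Let_def replicate_append_same)
qed

lemma competitive_ratio_greedy_minsum_ge: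
  assumes "0 < n"
  shows "ereal (real (n - 1)) \<le> competitive_ratio greedy_minsum n"
proof (rule competitive_ratio_ge_if_opt_le_1)
  let ?D = minsum_hard_profile
  show "(2, n - 1, ?D) \<in> instances"
    unfolding instances_def minsum_hard_profile_def by auto
  show "maxdis n ?D (replicate (n - 1) 1) \<le> 1"
    by (rule maxdis_replicate_le_1) (auto simp: minsum_hard_profile_def split: if_splits)
  have "n - 1 = dis ?D 0 (replicate (n - 1) 0)"
    unfolding dis_replicate by (simp add: minsum_hard_profile_def)
  also have "\<dots> \<le> maxdis n ?D (replicate (n - 1) 0)"
    using assms by (rule dis_le_maxdis)
  finally show "n - 1 \<le> maxdis n ?D (greedy_minsum n 2 (n - 1) ?D)"
    by (simp only: greedy_minsum_hard_profile)
qed auto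

lemma competitive_ratio_greedy_minmax_ge:
  assumes "0 < n"
  shows "ereal (real n) \<le> competitive_ratio greedy_minmax n"
proof (rule competitive_ratio_ge_if_opt_le_1)
  let ?D = minmax_hard_profile
  show "(2, n, ?D) \<in> instances"
    unfolding instances_def minmax_hard_profile_def by auto
  show "maxdis n ?D (replicate n 1) \<le> 1"
    by (rule maxdis_replicate_le_1) (auto simp: minmax_hard_profile_def split: if_splits)
  have "n = dis ?D 0 (replicate n 0)"
    unfolding dis_replicate by (simp add: minmax_hard_profile_def)
  also have "\<dots> \<le> maxdis n ?D (replicate n 0)"
    using assms by (rule dis_le_maxdis)
  finally show "n \<le> maxdis n ?D (greedy_minmax n 2 n ?D)"
    by (simp add: greedy_minmax_def greedy_minmax_prefix_hard_profile)
qed auto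

theorem proposition3:
  shows "\<exists>c > 0. \<exists>N. \<forall>n \<ge> N.
           ereal (c * real n) \<le> competitive_ratio greedy_minsum n \<and>
           ereal (c * real n) \<le> competitive_ratio greedy_minmax n"
proof (intro exI[of _ "1/2"] conjI exI[of _ 2] allI impI)
  fix n :: nat
  assume n: "2 \<le> n"
  have "ereal (1/2 * real n) \<le> ereal (real (n - 1))"
    using n by (simp add: of_nat_diff)
  also have "\<dots> \<le> competitive_ratio greedy_minsum n"
    using n by (intro competitive_ratio_greedy_minsum_ge) simp
  finally show "ereal (1/2 * real n) \<le> competitive_ratio greedy_minsum n" .
  have "ereal (1/2 * real n) \<le> ereal (real n)"
    by simp
  also have "\<dots> \<le> competitive_ratio greedy_minmax n"
    using n by (intro competitive_ratio_greedy_minmax_ge) simp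
  finally show "ereal (1/2 * real n) \<le> competitive_ratio greedy_minmax n" .
qed simp

end
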